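(* Let $P,T:\mathbb{Z}\to\mathrm{GL}(2,\mathbb{R})$ be cohomologous via a conjugacy sequence $Q:\mathbb{Z}\to\mathrm{GL}(2,\mathbb{R})$, i.e. $P(i)=Q(i+1)T(i)Q(i)^{-1}$ for all $i\in\mathbb{Z}$. Assume there exist constants $C_1,C_2$ with $C_1>\sigma_1(Q(i))\ge\sigma_2(Q(i))>C_2>0$ for all $i\in\mathbb{Z}$, where $\sigma_1(Q(i))\ge\sigma_2(Q(i))$ are the singular values of $Q(i)$. Then $P$ admits a dominated splitting if and only if $T$ admits a dominated splitting.
   Context: For a cocycle $A:\mathbb{Z}\to\mathrm{GL}(2,\mathbb{R})$ define $A_n(i)=A(i+n-1)\cdots A(i)$ for $n\ge1$. $\mathbb{RP}^1$ is the space of one-dimensional subspaces of $\mathbb{R}^2$ with the natural $\mathrm{GL}(2,\mathbb{R})$-action and metric $d(\bar u,\bar v)=\sqrt{1-(\langle u,v\rangle/(\|u\|\|v\|))^2}$; norms are Euclidean / operator norms. A cocycle $A:\mathbb{Z}\to\mathrm{GL}(2,\mathbb{R})$ admits a dominated splitting if $\sup_i\|A(i)\|<\infty$ and there exist maps $s,u:\mathbb{Z}\to\mathbb{RP}^1$ with: (DS1) $A(i)u(i)=u(i+1)$, $A(i)s(i)=s(i+1)$ for all $i$; (DS2) there exist $N\in\mathbb{N}$, $\eta>1$ with $\|A_N(i)\vec u\|>\eta\|A_N(i)\vec s\|$ for all $i$ and all unit vectors $\vec u\in u(i)$, $\vec s\in s(i)$; (DS3) there is $\delta>0$ with $d(u(i),s(i))>\delta$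 for all $i$; (DS4) for that $N$, $\inf_{i\in\mathbb{Z}}\|A_N(i)\|>0$. *)

theory Defs
  imports "HOL-Analysis.Analysis"
begin

type_synonym mat2 = "real^2^2"

definition opnorm :: "mat2 \<Rightarrow> real" where
  "opnorm A = onorm (\<lambda>v. A *v v)"

definition GL2_cocycle :: "(int \<Rightarrow> mat2) \<Rightarrow> bool" where
  "GL2_cocycle A \<longleftrightarrow> (\<forall>i. invertible (A i))"

text \<open>Products: cprod A n i = A(i+n-1) ... A(i); cprod A 0 i = identity.\<close>
fun cprod :: "(int \<Rightarrow> mat2) \<Rightarrow> nat \<Rightarrow> int \<Rightarrow> mat2" where
  "cprod A 0 i = mat 1"
| "cprod A (Suc n) i = A (i + int n) ** cprod A n i"

text \<open>Points of RP^1: one-dimensional subspaces of R^2.\<close>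
definition is_line :: "(real^2) set \<Rightarrow> bool" where
  "is_line L \<longleftrightarrow> subspace L \<and> dim L = 1"

definition line_act :: "mat2 \<Rightarrow> (real^2) set \<Rightarrow> (real^2) set" where
  "line_act A L = (\<lambda>v. A *v v) ` L"

text \<open>Metric on RP^1 (independent of the choice of nonzero representatives).\<close>
definition rp_dist :: "(real^2) set \<Rightarrow> (real^2) set \<Rightarrow> real" where
  "rp_dist L M = (let u = (SOME u. u \<in> L \<and> u \<noteq> 0); v = (SOME v. v \<in> M \<and> v \<noteq> 0)
     in sqrt (1 - ((u \<bullet> v) / (norm u * norm v))\<^sup>2))"

definition dominated_splitting :: "(int \<Rightarrow> mat2) \<Rightarrow> bool" where
  "dominated_splitting A \<longleftrightarrow>
     (\<exists>M. \<forall>i. opnorm (A i) \<le> M) \<and>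
     (\<exists>s u :: int \<Rightarrow> (real^2) set.
        (\<forall>i. is_line (s i) \<and> is_line (u i)) \<and>
        (\<forall>i. line_act (A i) (u i) = u (i + 1) \<and> line_act (A i) (s i) = s (i + 1)) \<and>
        (\<exists>N::nat. N \<ge> 1 \<and>
           (\<exists>\<eta>>1. \<forall>i. \<forall>uv \<in> u i. \<forall>sv \<in> s i. norm uv = 1 \<longrightarrow> norm sv = 1 \<longrightarrow>
                norm (cprod A N i *v uv) > \<eta> * norm (cprod A N i *v sv)) \<and>
           (\<exists>\<delta>>0. \<forall>i. rp_dist (u i) (s i) > \<delta>) \<and>
           (INF i. opnorm (cprod A N i)) > 0))"

definition sing_eigs :: "mat2 \<Rightarrow> real set" where
  "sing_eigs Q = {e. \<exists>v. v \<noteq> 0 \<and> (transpose Q ** Q) *v v = e *\<^sub>R v}"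

definition sigma1 :: "mat2 \<Rightarrow> real" where
  "sigma1 Q = sqrt (Max (sing_eigs Q))"

definition sigma2 :: "mat2 \<Rightarrow> real" where
  "sigma2 Q = sqrt (Min (sing_eigs Q))"

end

theory Submission
  imports Defs
begin

text \<open>
  Both \<open>Q\<close> and its inverse distort norms boundedly, i.e. \<open>k \<bar>v\<bar> \<le> \<bar>R v\<bar> \<le> K \<bar>v\<bar>\<close> with
  \<open>k > 0\<close>, so it suffices to transport a dominated splitting along such a conjugacy \<open>R\<close> by
  pushing the invariant lines forward. Ratios of growth rates along the two lines change by at
  most \<open>(K / k)\<^sup>2\<close>, which is absorbed by iterating the domination often enough; the angle
  between the lines shrinks by at most the same factor, as \<open>\<bar>det (R x, R y)\<bar> \<ge> k\<^sup>2 \<bar>det (x, y)\<bar>\<close>;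
  and the products stay bounded below because in a dominated splitting the unstable line carries
  the norm of \<open>A\<^sub>N\<close> up to a factor depending only on the angle, hence is uniformly expanded.
\<close>

section \<open>Planar vectors and lines\<close>

definition det2 :: "real^2 \<Rightarrow> real^2 \<Rightarrow> real" where
  "det2 x y = x$1 * y$2 - x$2 * y$1"

lemma vec2_eq_iff: "(x::'a^2) = y \<longleftrightarrow> x$1 = y$1 \<and> x$2 = y$2"
  by (simp add: vec_eq_iff forall_2)

lemma norm_vec2_square: "(norm (x::real^2))\<^sup>2 = (x$1)\<^sup>2 + (x$2)\<^sup>2"
  by (simp add: norm_vec_def L2_set_def sum_2)

lemma inner_vec2: "(x::real^2) \<bullet> y = x$1 * y$1 + x$2 * y$2"
  by (simp add: inner_vec_def sum_2)

lemma matrix_vector_mult_vec2: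
  "((A::real^2^2) *v x)$1 = A$1$1 * x$1 + A$1$2 * x$2"
  "((A::real^2^2) *v x)$2 = A$2$1 * x$1 + A$2$2 * x$2"
  by (simp_all add: matrix_vector_mult_def sum_2)

lemma inner_square_plus_det2_square: "(x \<bullet> y)\<^sup>2 + (det2 x y)\<^sup>2 = (norm x * norm y)\<^sup>2"
  unfolding power_mult_distrib norm_vec2_square inner_vec2 det2_def
  by (simp add: power2_eq_square algebra_simps)

lemma abs_det2_le: "\<bar>det2 x y\<bar> \<le> norm x * norm y"
proof -
  have "(det2 x y)\<^sup>2 \<le> (norm x * norm y)\<^sup>2"
    using inner_square_plus_det2_square[of x y] zero_le_power2[of "x \<bullet> y"] by linarith
  then show ?thesis
    using abs_le_square_iff[of "det2 x y" "norm x * norm y"] by simp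
qed

lemma abs_det2_orthogonal:
  assumes "x \<bullet> y = 0"
  shows "\<bar>det2 x y\<bar> = norm x * norm y"
proof -
  have "sqrt ((det2 x y)\<^sup>2) = sqrt ((norm x * norm y)\<^sup>2)"
    using inner_square_plus_det2_square[of x y] assms by simp
  then show ?thesis by simp
qed

lemma det2_scaleR: "det2 (a *\<^sub>R x) (b *\<^sub>R y) = a * b * det2 x y"
  by (simp add: det2_def algebra_simps)

lemma det2_diff_scaleR_right: "det2 x (y - t *\<^sub>R x) = det2 x y"
  by (simp add: det2_def algebra_simps)

lemma vec2_decompose:
  assumes "det2 x y \<noteq> 0"
  shows "w = (det2 w y / det2 x y) *\<^sub>R x + (det2 x w / det2 x y) *\<^sub>R y"
proof -
  have "w$1 * det2 x y = det2 w y * x$1 + det2 x w * y$1"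
    and "w$2 * det2 x y = det2 w y * x$2 + det2 x w * y$2"
    by (simp_all add: det2_def algebra_simps)
  then show ?thesis
    using assms unfolding vec2_eq_iff by (simp add: field_simps)
qed

lemma sine_eq_abs_det2:
  assumes "x \<noteq> 0" "y \<noteq> 0"
  shows "sqrt (1 - ((x \<bullet> y) / (norm x * norm y))\<^sup>2) = \<bar>det2 x y\<bar> / (norm x * norm y)"
proof -
  have "1 - ((x \<bullet> y) / (norm x * norm y))\<^sup>2 = (det2 x y / (norm x * norm y))\<^sup>2"
    using inner_square_plus_det2_square[of x y] assms by (simp add: power_divide field_simps)
  then show ?thesis by simp
qed

lemma is_line_iff: "is_line L \<longleftrightarrow> (\<exists>b. b \<noteq> 0 \<and> L = span {b})"
proof
  assume L: "is_line L"
  then obtain B where B: "B \<subseteq> L" "independent B" "L \<subseteq> span B" "card B = 1"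
    using basis_exists[of L] by (metis is_line_def)
  then obtain b where b: "B = {b}"
    using card_1_singletonE by blast
  have "L = span {b}"
    using B b L by (metis is_line_def span_minimal subset_antisym)
  moreover have "b \<noteq> 0"
    using B(2) b dependent_zero by blast
  ultimately show "\<exists>b. b \<noteq> 0 \<and> L = span {b}" by blast
qed (auto simp: is_line_def)

lemma line_collinear:
  assumes "is_line L" "x \<in> L" "x \<noteq> 0" "y \<in> L"
  shows "\<exists>t. y = t *\<^sub>R x"
proof -
  obtain b where "L = span {b}"
    using assms(1) is_line_iff by blast
  then obtain p q where pq: "x = p *\<^sub>R b" "y = q *\<^sub>R b"
    using assms(2,4) by (auto simp: span_singleton)
  then have "p \<noteq> 0" using assms(3) by auto
  then have "y = (q / p) *\<^sub>R x" using pq by simp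
  then show ?thesis ..
qed

lemma line_has_unit:
  assumes "is_line L"
  shows "\<exists>x\<in>L. norm x = 1"
proof -
  obtain b where "b \<noteq> 0" "L = span {b}"
    using assms is_line_iff by blast
  then show ?thesis
    by (intro bexI[of _ "(1 / norm b) *\<^sub>R b"]) (auto simp: span_singleton)
qed

lemma is_line_image:
  assumes "is_line L" "inj ((*v) R)"
  shows "is_line (line_act R L)"
proof -
  obtain b where b: "b \<noteq> 0" "L = span {b}"
    using assms(1) is_line_iff by blast
  have "line_act R L = span {R *v b}"
    unfolding line_act_def b(2) using span_linear_image[of "(*v) R" "{b}"] by simp
  moreover have "R *v b \<noteq> 0"
    using b(1) assms(2) by (metis injD matrix_vector_mult_0_right)
  ultimately show ?thesis
    using is_line_iff by blast
qed

lemma rp_dist_eq: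
  assumes "is_line L" "is_line M" "x \<in> L" "x \<noteq> 0" "y \<in> M" "y \<noteq> 0"
  shows "rp_dist L M = \<bar>det2 x y\<bar> / (norm x * norm y)"
proof -
  define u where "u = (SOME u. u \<in> L \<and> u \<noteq> 0)"
  define v where "v = (SOME v. v \<in> M \<and> v \<noteq> 0)"
  have u: "u \<in> L" "u \<noteq> 0"
    unfolding u_def using someI[of "\<lambda>u. u \<in> L \<and> u \<noteq> 0" x] assms(3,4) by auto
  have v: "v \<in> M" "v \<noteq> 0"
    unfolding v_def using someI[of "\<lambda>v. v \<in> M \<and> v \<noteq> 0" y] assms(5,6) by auto
  obtain t r where tr: "u = t *\<^sub>R x" "v = r *\<^sub>R y"
    using line_collinear assms u(1) v(1) by metis
  have "rp_dist L M = \<bar>det2 u v\<bar> / (norm u * norm v)"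
    unfolding rp_dist_def u_def v_def Let_def using sine_eq_abs_det2 u v by (simp add: u_def v_def)
  also have "\<dots> = \<bar>det2 x y\<bar> / (norm x * norm y)"
    using u(2) v(2) unfolding tr det2_scaleR by (simp add: abs_mult)
  finally show ?thesis .
qed

section \<open>Singular values of 2x2 matrices\<close>

definition sym2_eig_max :: "mat2 \<Rightarrow> real" where
  "sym2_eig_max S = (S$1$1 + S$2$2 + sqrt ((S$1$1 - S$2$2)\<^sup>2 + 4 * (S$1$2)\<^sup>2)) / 2"

definition sym2_eig_min :: "mat2 \<Rightarrow> real" where
  "sym2_eig_min S = (S$1$1 + S$2$2 - sqrt ((S$1$1 - S$2$2)\<^sup>2 + 4 * (S$1$2)\<^sup>2)) / 2"

lemma sym2_eig_min_le_max: "sym2_eig_min S \<le> sym2_eig_max S"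
  by (simp add: sym2_eig_min_def sym2_eig_max_def)

lemma sym2_charpoly_root_iff:
  "(S$1$1 - l) * (S$2$2 - l) = (S$1$2)\<^sup>2 \<longleftrightarrow> l = sym2_eig_max S \<or> l = sym2_eig_min S"
proof -
  define D where "D = (S$1$1 - S$2$2)\<^sup>2 + 4 * (S$1$2)\<^sup>2"
  have "(2 * l - (S$1$1 + S$2$2))\<^sup>2 - D = 4 * ((S$1$1 - l) * (S$2$2 - l) - (S$1$2)\<^sup>2)"
    unfolding D_def by (simp add: power2_eq_square algebra_simps)
  then have "(S$1$1 - l) * (S$2$2 - l) = (S$1$2)\<^sup>2 \<longleftrightarrow> (2 * l - (S$1$1 + S$2$2))\<^sup>2 = (sqrt D)\<^sup>2"
    unfolding D_def by auto
  also have "\<dots> \<longleftrightarrow> l = sym2_eig_max S \<or> l = sym2_eig_min S"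
    unfolding power2_eq_iff sym2_eig_max_def sym2_eig_min_def D_def by auto
  finally show ?thesis .
qed

lemma eigenvalues_sym2:
  assumes sym: "S$2$1 = S$1$2"
  shows "{e. \<exists>v. v \<noteq> 0 \<and> S *v v = e *\<^sub>R v} = {sym2_eig_max S, sym2_eig_min S}"
proof (intro equalityI subsetI)
  fix e assume "e \<in> {e. \<exists>v. v \<noteq> 0 \<and> S *v v = e *\<^sub>R v}"
  then obtain w where w: "w \<noteq> 0" "S *v w = e *\<^sub>R w" by blast
  have eq1: "(S$1$1 - e) * w$1 + S$1$2 * w$2 = 0" and eq2: "S$1$2 * w$1 + (S$2$2 - e) * w$2 = 0"
    using w(2) sym unfolding vec2_eq_iff matrix_vector_mult_vec2 by (simp_all add: algebra_simps)
  define p where "p = (S$1$1 - e) * (S$2$2 - e) - (S$1$2)\<^sup>2"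
  have "p * w$1 = (S$2$2 - e) * ((S$1$1 - e) * w$1 + S$1$2 * w$2) - S$1$2 * (S$1$2 * w$1 + (S$2$2 - e) * w$2)"
    and "p * w$2 = (S$1$1 - e) * (S$1$2 * w$1 + (S$2$2 - e) * w$2) - S$1$2 * ((S$1$1 - e) * w$1 + S$1$2 * w$2)"
    unfolding p_def by (simp_all add: power2_eq_square algebra_simps)
  then have "p = 0"
    using w(1) eq1 eq2 unfolding vec2_eq_iff by auto
  then show "e \<in> {sym2_eig_max S, sym2_eig_min S}"
    using sym2_charpoly_root_iff[of S e] unfolding p_def by simp
next
  fix l assume "l \<in> {sym2_eig_max S, sym2_eig_min S}"
  then have char: "(S$1$1 - l) * (S$2$2 - l) = (S$1$2)\<^sup>2"
    using sym2_charpoly_root_iff by blast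
  \<comment> \<open>an eigenvector is read off the first row of \<open>S - l\<close>, unless that row vanishes\<close>
  define w :: "real^2" where
    "w = (if S$1$2 = 0 \<and> l = S$1$1 then (\<chi> i. if i = 1 then 1 else 0) else (\<chi> i. if i = 1 then S$1$2 else l - S$1$1))"
  have "w \<noteq> 0"
    unfolding w_def vec2_eq_iff by auto
  moreover have "S *v w = l *\<^sub>R w"
    using char sym unfolding w_def vec2_eq_iff matrix_vector_mult_vec2
    by (auto simp: power2_eq_square algebra_simps)
  ultimately show "l \<in> {e. \<exists>v. v \<noteq> 0 \<and> S *v v = e *\<^sub>R v}" by blast
qed

lemma binary_form_nonneg:
  fixes p r b x y :: real
  assumes "p * r = b\<^sup>2" "p + r \<ge> 0"
  shows "0 \<le> p * x\<^sup>2 + 2 * b * x * y + r * y\<^sup>2"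
proof (cases "p = 0")
  case True
  then show ?thesis using assms by simp
next
  case False
  have "p > 0"
    using assms False by (smt (verit) mult_neg_pos zero_le_power2)
  moreover have "p * (p * x\<^sup>2 + 2 * b * x * y + r * y\<^sup>2) = (p * x + b * y)\<^sup>2"
    using assms(1) by (simp add: power2_eq_square algebra_simps)
  ultimately show ?thesis
    by (metis zero_le_power2 zero_le_mult_iff not_less)
qed

lemma sym2_quadform_bounds:
  assumes sym: "S$2$1 = S$1$2"
  shows "sym2_eig_min S * (norm v)\<^sup>2 \<le> v \<bullet> (S *v v)"
    and "v \<bullet> (S *v v) \<le> sym2_eig_max S * (norm v)\<^sup>2"
proof -
  have form: "v \<bullet> (S *v v) = S$1$1 * (v$1)\<^sup>2 + 2 * S$1$2 * v$1 * v$2 + S$2$2 * (v$2)\<^sup>2"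
    using sym unfolding inner_vec2 matrix_vector_mult_vec2 by (simp add: power2_eq_square algebra_simps)
  define D where "D = (S$1$1 - S$2$2)\<^sup>2 + 4 * (S$1$2)\<^sup>2"
  have gap: "sym2_eig_max S - S$1$1 + (sym2_eig_max S - S$2$2) = sqrt D"
    "S$1$1 - sym2_eig_min S + (S$2$2 - sym2_eig_min S) = sqrt D"
    unfolding sym2_eig_max_def sym2_eig_min_def D_def by simp_all
  have "0 \<le> (S$1$1 - sym2_eig_min S) * (v$1)\<^sup>2 + 2 * S$1$2 * v$1 * v$2 + (S$2$2 - sym2_eig_min S) * (v$2)\<^sup>2"
    using gap(2) sym2_charpoly_root_iff[of S "sym2_eig_min S"]
    by (intro binary_form_nonneg) (simp_all add: D_def)
  then show "sym2_eig_min S * (norm v)\<^sup>2 \<le> v \<bullet> (S *v v)"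
    unfolding form norm_vec2_square by (simp add: algebra_simps)
  have "0 \<le> (sym2_eig_max S - S$1$1) * (v$1)\<^sup>2 + 2 * (- S$1$2) * v$1 * v$2 + (sym2_eig_max S - S$2$2) * (v$2)\<^sup>2"
    using gap(1) sym2_charpoly_root_iff[of S "sym2_eig_max S"]
    by (intro binary_form_nonneg) (simp_all add: D_def algebra_simps)
  then show "v \<bullet> (S *v v) \<le> sym2_eig_max S * (norm v)\<^sup>2"
    unfolding form norm_vec2_square by (simp add: algebra_simps)
qed

lemma norm_square_eq_quadform:
  fixes Q :: "real^'n^'m"
  shows "(norm (Q *v v))\<^sup>2 = v \<bullet> ((transpose Q ** Q) *v v)"
proof -
  have "v \<bullet> ((transpose Q ** Q) *v v) = ((Q *v v) v* Q) \<bullet> v"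
    by (simp add: matrix_vector_mul_assoc[symmetric] inner_commute)
  also have "\<dots> = (Q *v v) \<bullet> (Q *v v)"
    by (rule dot_lmul_matrix)
  finally show ?thesis
    by (simp add: power2_norm_eq_inner)
qed

lemma transpose_mult_self_symmetric:
  fixes Q :: "'a::comm_semiring_1^'n^'m"
  shows "(transpose Q ** Q)$i$j = (transpose Q ** Q)$j$i"
  by (simp add: matrix_matrix_mult_def transpose_def mult.commute)

lemma sing_eigs_eq: "sing_eigs Q = {sym2_eig_max (transpose Q ** Q), sym2_eig_min (transpose Q ** Q)}"
  unfolding sing_eigs_def by (rule eigenvalues_sym2[OF transpose_mult_self_symmetric])

lemma sigma1_eq: "sigma1 Q = sqrt (sym2_eig_max (transpose Q ** Q))"
  unfolding sigma1_def sing_eigs_eq by (simp add: max_absorb1 sym2_eig_min_le_max)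

lemma sigma2_eq: "sigma2 Q = sqrt (sym2_eig_min (transpose Q ** Q))"
  unfolding sigma2_def sing_eigs_eq by (simp add: min_absorb2 sym2_eig_min_le_max)

lemma norm_matrix_vector_le_sigma1: "norm (Q *v v) \<le> sigma1 Q * norm v"
proof -
  have "norm (Q *v v) = sqrt ((norm (Q *v v))\<^sup>2)"
    by simp
  also have "\<dots> \<le> sqrt (sym2_eig_max (transpose Q ** Q) * (norm v)\<^sup>2)"
    unfolding norm_square_eq_quadform
    by (intro real_sqrt_le_mono sym2_quadform_bounds transpose_mult_self_symmetric)
  also have "\<dots> = sigma1 Q * norm v"
    by (simp add: sigma1_eq real_sqrt_mult)
  finally show ?thesis .
qed

lemma sigma2_le_norm_matrix_vector: "sigma2 Q * norm v \<le> norm (Q *v v)"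
proof -
  have "sigma2 Q * norm v = sqrt (sym2_eig_min (transpose Q ** Q) * (norm v)\<^sup>2)"
    by (simp add: sigma2_eq real_sqrt_mult)
  also have "\<dots> \<le> sqrt ((norm (Q *v v))\<^sup>2)"
    unfolding norm_square_eq_quadform
    by (intro real_sqrt_le_mono sym2_quadform_bounds transpose_mult_self_symmetric)
  also have "\<dots> = norm (Q *v v)"
    by simp
  finally show ?thesis .
qed

section \<open>Cocycles and bounded conjugacies\<close>

lemma line_act_mult: "line_act (A ** B) L = line_act A (line_act B L)"
  unfolding line_act_def by (auto simp: image_comp matrix_vector_mul_assoc[symmetric])

lemma line_act_conj: "G ** R = R' ** F \<Longrightarrow> line_act G (line_act R L) = line_act R' (line_act F L)"
  by (metis line_act_mult)

lemma cprod_add: "cprod A (m + n) i = cprod A n (i + int m) ** cprod A m i"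
proof (induction n)
  case 0
  then show ?case by (simp add: matrix_mul_lid)
next
  case (Suc n)
  then show ?case by (simp add: matrix_mul_assoc add.assoc)
qed

lemma cprod_line_act:
  assumes "\<forall>j. line_act (A j) (L j) = L (j + 1)"
  shows "line_act (cprod A n i) (L i) = L (i + int n)"
proof (induction n)
  case 0
  then show ?case by (simp add: line_act_def)
next
  case (Suc n)
  then show ?case using assms by (simp add: line_act_mult ac_simps)
qed

lemma cprod_conj:
  assumes "\<forall>i. A' i ** R i = R (i + 1) ** A i"
  shows "cprod A' n i ** R i = R (i + int n) ** cprod A n i"
proof (induction n)
  case 0
  then show ?case by (simp add: matrix_mul_lid matrix_mul_rid)
next
  case (Suc n)
  have "cprod A' (Suc n) i ** R i = (A' (i + int n) ** R (i + int n)) ** cprod A n i"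
    using Suc by (simp add: matrix_mul_assoc[symmetric])
  also have "\<dots> = (R (i + int n + 1) ** A (i + int n)) ** cprod A n i"
    using assms by simp
  also have "\<dots> = R (i + int (Suc n)) ** cprod A (Suc n) i"
    by (simp add: matrix_mul_assoc ac_simps)
  finally show ?case .
qed

lemma matrix_inv_right: "invertible A \<Longrightarrow> A ** matrix_inv A = mat 1"
  and matrix_inv_left: "invertible A \<Longrightarrow> matrix_inv A ** A = mat 1"
  unfolding invertible_def matrix_inv_def by (metis (mono_tags, lifting) someI_ex)+

lemma norm_le_opnorm: "norm (A *v v) \<le> opnorm A * norm v"
  unfolding opnorm_def by (rule onorm) simp

lemma opnorm_nonneg: "0 \<le> opnorm A"
  unfolding opnorm_def by (rule onorm_pos_le) simp

definition stretch_bounds :: "real \<Rightarrow> real \<Rightarrow> mat2 \<Rightarrow> bool" where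
  "stretch_bounds k K R \<longleftrightarrow> (\<forall>v. k * norm v \<le> norm (R *v v) \<and> norm (R *v v) \<le> K * norm v)"

lemma stretch_bounds_le: "stretch_bounds k K R \<Longrightarrow> k \<le> K"
  unfolding stretch_bounds_def using norm_axis_1[where 'a=2 and m=1] by (metis mult.right_neutral order.trans)

lemma stretch_bounds_mono:
  "stretch_bounds k K R \<Longrightarrow> k' \<le> k \<Longrightarrow> K \<le> K' \<Longrightarrow> stretch_bounds k' K' R"
  unfolding stretch_bounds_def by (meson mult_right_mono norm_ge_zero order_trans)

lemma stretch_bounds_sigma: "stretch_bounds (sigma2 Q) (sigma1 Q) Q"
  unfolding stretch_bounds_def using sigma2_le_norm_matrix_vector norm_matrix_vector_le_sigma1 by blast

lemma stretch_bounds_invertible: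
  assumes "stretch_bounds k K R" "k > 0"
  shows "invertible R"
proof -
  have "R *v v = 0 \<Longrightarrow> v = 0" for v
    using assms unfolding stretch_bounds_def by (metis mult_le_0_iff norm_eq_zero norm_le_zero_iff not_le)
  then show ?thesis
    unfolding invertible_left_inverse matrix_left_invertible_ker by blast
qed

lemma stretch_bounds_inj: "stretch_bounds k K R \<Longrightarrow> k > 0 \<Longrightarrow> inj ((*v) R)"
  by (metis stretch_bounds_invertible matrix_inv_left matrix_left_invertible_injective)

lemma stretch_bounds_matrix_inv:
  assumes R: "stretch_bounds k K R" and k: "k > 0"
  shows "stretch_bounds (1 / K) (1 / k) (matrix_inv R)"
  unfolding stretch_bounds_def
proof
  fix v
  have "R *v (matrix_inv R *v v) = v"
    using matrix_inv_right[OF stretch_bounds_invertible[OF R k]]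
    by (simp add: matrix_vector_mul_assoc)
  then have "k * norm (matrix_inv R *v v) \<le> norm v" "norm v \<le> K * norm (matrix_inv R *v v)"
    using R unfolding stretch_bounds_def by metis+
  moreover have "K > 0"
    using stretch_bounds_le[OF R] k by simp
  ultimately show "1 / K * norm v \<le> norm (matrix_inv R *v v) \<and> norm (matrix_inv R *v v) \<le> 1 / k * norm v"
    using k by (simp add: field_simps)
qed

lemma opnorm_conj_le:
  assumes GF: "G ** R = R' ** F" and R: "stretch_bounds k K R" and R': "stretch_bounds k K R'"
    and k: "k > 0" and F: "opnorm F \<le> M"
  shows "opnorm G \<le> K * M / k"
  unfolding opnorm_def[of G]
proof (rule onorm_le)
  fix v
  define w where "w = matrix_inv R *v v"
  have v: "v = R *v w"
    unfolding w_def using matrix_inv_right[OF stretch_bounds_invertible[OF R k]]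
    by (simp add: matrix_vector_mul_assoc)
  have K: "K \<ge> 0"
    using stretch_bounds_le[OF R] k by simp
  have M: "M \<ge> 0"
    using F opnorm_nonneg[of F] by linarith
  have "norm (G *v v) = norm (R' *v (F *v w))"
    using GF by (simp add: v matrix_vector_mul_assoc)
  also have "\<dots> \<le> K * norm (F *v w)"
    using R' unfolding stretch_bounds_def by blast
  also have "\<dots> \<le> K * (M * norm w)"
    using norm_le_opnorm[of F w] F K by (meson mult_left_mono mult_right_mono norm_ge_zero order_trans)
  also have "\<dots> \<le> K * (M * (norm v / k))"
  proof -
    have "norm w \<le> norm v / k"
      using R k unfolding v stretch_bounds_def by (simp add: field_simps mult.commute)
    then show ?thesis
      using K M by (intro mult_left_mono) auto
  qed
  finally show "norm (G *v v) \<le> K * M / k * norm v"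
    by simp
qed

section \<open>Domination along a pair of lines\<close>

definition dominates :: "mat2 \<Rightarrow> (real^2) set \<Rightarrow> (real^2) set \<Rightarrow> real \<Rightarrow> bool" where
  "dominates F U S \<eta> \<longleftrightarrow>
     (\<forall>x\<in>U. \<forall>y\<in>S. x \<noteq> 0 \<longrightarrow> y \<noteq> 0 \<longrightarrow> \<eta> * norm (F *v y) * norm x < norm (F *v x) * norm y)"

lemma dominates_iff_unit:
  assumes "subspace U" "subspace S"
  shows "dominates F U S \<eta> \<longleftrightarrow>
    (\<forall>x\<in>U. \<forall>y\<in>S. norm x = 1 \<longrightarrow> norm y = 1 \<longrightarrow> \<eta> * norm (F *v y) < norm (F *v x))"
proof
  assume "dominates F U S \<eta>"
  then show "\<forall>x\<in>U. \<forall>y\<in>S. norm x = 1 \<longrightarrow> norm y = 1 \<longrightarrow> \<eta> * norm (F *v y) < norm (F *v x)"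
    unfolding dominates_def by fastforce
next
  assume unit: "\<forall>x\<in>U. \<forall>y\<in>S. norm x = 1 \<longrightarrow> norm y = 1 \<longrightarrow> \<eta> * norm (F *v y) < norm (F *v x)"
  show "dominates F U S \<eta>"
    unfolding dominates_def
  proof (intro ballI impI)
    fix x y assume xy: "x \<in> U" "y \<in> S" "x \<noteq> 0" "y \<noteq> 0"
    have "\<eta> * norm (F *v ((1 / norm y) *\<^sub>R y)) < norm (F *v ((1 / norm x) *\<^sub>R x))"
      using unit xy assms by (simp add: subspace_scale)
    then have "\<eta> * (norm (F *v y) / norm y) < norm (F *v x) / norm x"
      by (simp add: matrix_vector_mult_scaleR divide_inverse_commute)
    then show "\<eta> * norm (F *v y) * norm x < norm (F *v x) * norm y"
      using xy by (simp add: field_simps)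
  qed
qed

lemma dominates_mult:
  assumes F: "dominates F U S \<eta>" and G: "dominates G (line_act F U) (line_act F S) \<eta>'"
    and "\<eta> \<ge> 0" "\<eta>' \<ge> 0" and nontrivial: "\<exists>z\<in>line_act F S. z \<noteq> 0"
  shows "dominates (G ** F) U S (\<eta>' * \<eta>)"
  unfolding dominates_def
proof (intro ballI impI)
  fix x y assume xy: "x \<in> U" "y \<in> S" "x \<noteq> 0" "y \<noteq> 0"
  have Fxy: "F *v x \<in> line_act F U" "F *v y \<in> line_act F S"
    using xy unfolding line_act_def by auto
  have domF: "\<eta> * norm (F *v y) * norm x < norm (F *v x) * norm y"
    using F xy unfolding dominates_def by blast
  moreover have "0 \<le> \<eta> * norm (F *v y) * norm x"
    using \<open>\<eta> \<ge> 0\<close> by simp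
  ultimately have Fx: "F *v x \<noteq> 0"
    by auto
  show "\<eta>' * \<eta> * norm ((G ** F) *v y) * norm x < norm ((G ** F) *v x) * norm y"
  proof (cases "F *v y = 0")
    case True
    obtain z where "z \<in> line_act F S" "z \<noteq> 0"
      using nontrivial by blast
    then have "\<eta>' * norm (G *v z) * norm (F *v x) < norm (G *v (F *v x)) * norm z"
      using G Fxy(1) Fx unfolding dominates_def by blast
    moreover have "0 \<le> \<eta>' * norm (G *v z) * norm (F *v x)"
      using \<open>\<eta>' \<ge> 0\<close> by simp
    ultimately have "G *v (F *v x) \<noteq> 0"
      by auto
    then show ?thesis
      using True xy by (simp add: matrix_vector_mul_assoc[symmetric])
  next
    case False
    have domG: "\<eta>' * norm (G *v (F *v y)) * norm (F *v x) < norm (G *v (F *v x)) * norm (F *v y)"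
      using G Fxy Fx False unfolding dominates_def by blast
    have "(\<eta>' * norm (G *v (F *v y)) * norm (F *v x)) * (\<eta> * norm (F *v y) * norm x)
        < (norm (G *v (F *v x)) * norm (F *v y)) * (norm (F *v x) * norm y)"
    proof (rule mult_strict_mono[OF domG domF])
      have "0 \<le> \<eta>' * norm (G *v (F *v y)) * norm (F *v x)"
        using \<open>\<eta>' \<ge> 0\<close> by simp
      then show "0 < norm (G *v (F *v x)) * norm (F *v y)"
        using domG by linarith
    qed (use \<open>\<eta> \<ge> 0\<close> in simp)
    then have "(\<eta>' * \<eta> * norm (G *v (F *v y)) * norm x) * (norm (F *v x) * norm (F *v y))
        < (norm (G *v (F *v x)) * norm y) * (norm (F *v x) * norm (F *v y))"
      by (simp add: ac_simps)
    then show ?thesis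
      by (simp add: matrix_vector_mul_assoc[symmetric] mult_less_cancel_right)
  qed
qed

lemma dominates_cprod_pow:
  assumes u: "\<forall>j. line_act (A j) (u j) = u (j + 1)" and s: "\<forall>j. line_act (A j) (s j) = s (j + 1)"
    and lines: "\<forall>j. is_line (s j)" and dom: "\<forall>j. dominates (cprod A N j) (u j) (s j) \<eta>"
    and "\<eta> \<ge> 0" "m > 0"
  shows "dominates (cprod A (m * N) i) (u i) (s i) (\<eta> ^ m)"
  using \<open>m > 0\<close>
proof (induction m rule: nat_induct_non_zero)
  case 1
  then show ?case using dom by simp
next
  case (Suc m)
  have "dominates (cprod A N (i + int (m * N)) ** cprod A (m * N) i) (u i) (s i) (\<eta> * \<eta> ^ m)"
  proof (rule dominates_mult)
    show "dominates (cprod A N (i + int (m * N)))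
        (line_act (cprod A (m * N) i) (u i)) (line_act (cprod A (m * N) i) (s i)) \<eta>"
      unfolding cprod_line_act[OF u] cprod_line_act[OF s] using dom by blast
    show "\<exists>z\<in>line_act (cprod A (m * N) i) (s i). z \<noteq> 0"
      unfolding cprod_line_act[OF s] using lines line_has_unit by (metis norm_zero zero_neq_one)
  qed (use Suc \<open>\<eta> \<ge> 0\<close> in simp_all)
  then show ?case
    using cprod_add[of A "m * N" N i] by (simp add: add.commute)
qed

lemma dominates_conj:
  assumes dom: "dominates F U S \<eta>" and "\<eta> \<ge> 0" and GF: "G ** R = R' ** F"
    and R: "stretch_bounds k K R" and R': "stretch_bounds k K R'" and k: "k > 0"
  shows "dominates G (line_act R U) (line_act R S) (\<eta> * (k / K)\<^sup>2)"
  unfolding dominates_def line_act_def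
proof (intro ballI impI, elim imageE)
  fix x' y' x y assume xy: "x' = R *v x" "y' = R *v y" "x \<in> U" "y \<in> S" "x' \<noteq> 0" "y' \<noteq> 0"
  have K: "K > 0"
    using stretch_bounds_le[OF R] k by simp
  have Gv: "G *v (R *v v) = R' *v (F *v v)" for v
    using GF by (simp add: matrix_vector_mul_assoc)
  have "x \<noteq> 0" "y \<noteq> 0"
    using xy by auto
  then have domxy: "\<eta> * norm (F *v y) * norm x < norm (F *v x) * norm y"
    using dom xy unfolding dominates_def by blast
  have "\<eta> * (k / K)\<^sup>2 * norm (G *v y') * norm x'
      = \<eta> * (k / K)\<^sup>2 * norm (R' *v (F *v y)) * norm (R *v x)"
    unfolding xy Gv ..
  also have "\<dots> \<le> \<eta> * (k / K)\<^sup>2 * (K * norm (F *v y)) * (K * norm x)"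
    using R R' \<open>\<eta> \<ge> 0\<close> K unfolding stretch_bounds_def
    by (intro mult_mono mult_left_mono) auto
  also have "\<dots> = k\<^sup>2 * (\<eta> * norm (F *v y) * norm x)"
    using K by (simp add: power2_eq_square field_simps)
  also have "\<dots> < k\<^sup>2 * (norm (F *v x) * norm y)"
    using domxy k by simp
  also have "\<dots> = (k * norm (F *v x)) * (k * norm y)"
    by (simp add: power2_eq_square)
  also have "\<dots> \<le> norm (G *v x') * norm y'"
    using R R' k unfolding xy Gv stretch_bounds_def by (intro mult_mono) auto
  finally show "\<eta> * (k / K)\<^sup>2 * norm (G *v y') * norm x' < norm (G *v x') * norm y'" .
qed

section \<open>Transport of dominated splittings\<close>

lemma dominated_splitting_iff:
  "dominated_splitting A \<longleftrightarrow>
     (\<exists>M. \<forall>i. opnorm (A i) \<le> M) \<and>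
     (\<exists>s u. (\<forall>i. is_line (s i) \<and> is_line (u i)) \<and>
        (\<forall>i. line_act (A i) (u i) = u (i + 1) \<and> line_act (A i) (s i) = s (i + 1)) \<and>
        (\<exists>N::nat. N \<ge> 1 \<and> (\<exists>\<eta>>1. \<forall>i. dominates (cprod A N i) (u i) (s i) \<eta>) \<and>
           (\<exists>\<delta>>0. \<forall>i. rp_dist (u i) (s i) > \<delta>) \<and> (INF i. opnorm (cprod A N i)) > 0))"
proof -
  have "(\<forall>i. dominates (cprod A N i) (u i) (s i) \<eta>) \<longleftrightarrow>
      (\<forall>i. \<forall>uv \<in> u i. \<forall>sv \<in> s i. norm uv = 1 \<longrightarrow> norm sv = 1 \<longrightarrow>
        norm (cprod A N i *v uv) > \<eta> * norm (cprod A N i *v sv))"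
    if "\<forall>i. is_line (s i) \<and> is_line (u i)" for s u N \<eta>
    using that dominates_iff_unit by (simp add: is_line_def)
  then show ?thesis
    unfolding dominated_splitting_def by blast
qed

lemma abs_det2_image_ge:
  assumes R: "\<forall>v. k * norm v \<le> norm (R *v v)" and k: "k > 0"
  shows "k\<^sup>2 * \<bar>det2 x y\<bar> \<le> \<bar>det2 (R *v x) (R *v y)\<bar>"
proof (cases "x = 0")
  case True
  then show ?thesis by (simp add: det2_def)
next
  case False
  define a where "a = R *v x"
  have "0 < k * norm x"
    using False k by simp
  then have "a \<noteq> 0"
    using R unfolding a_def by (metis norm_zero not_le)
  \<comment> \<open>replace \<open>y\<close> by \<open>y - t x\<close>, chosen so that its image is orthogonal to \<open>a\<close>\<close>
  define t where "t = (a \<bullet> (R *v y)) / (norm a)\<^sup>2"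
  define z where "z = y - t *\<^sub>R x"
  have Rz: "R *v z = R *v y - t *\<^sub>R a"
    unfolding z_def a_def by (simp add: matrix_vector_mult_diff_distrib matrix_vector_mult_scaleR)
  have "a \<bullet> (R *v z) = 0"
    unfolding Rz t_def using \<open>a \<noteq> 0\<close> by (simp add: inner_diff_right power2_norm_eq_inner)
  have "k\<^sup>2 * \<bar>det2 x y\<bar> = k\<^sup>2 * \<bar>det2 x z\<bar>"
    unfolding z_def det2_diff_scaleR_right ..
  also have "\<dots> \<le> k\<^sup>2 * (norm x * norm z)"
    by (intro mult_left_mono abs_det2_le) simp
  also have "\<dots> = (k * norm x) * (k * norm z)"
    by (simp add: power2_eq_square ac_simps)
  also have "\<dots> \<le> norm a * norm (R *v z)"
    using R k unfolding a_def by (intro mult_mono) auto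
  also have "\<dots> = \<bar>det2 a (R *v z)\<bar>"
    using abs_det2_orthogonal[OF \<open>a \<bullet> (R *v z) = 0\<close>] ..
  also have "\<dots> = \<bar>det2 (R *v x) (R *v y)\<bar>"
    unfolding Rz det2_diff_scaleR_right a_def ..
  finally show ?thesis .
qed

lemma rp_dist_line_act_ge:
  assumes U: "is_line U" and S: "is_line S" and R: "stretch_bounds k K R" and k: "k > 0"
  shows "(k / K)\<^sup>2 * rp_dist U S \<le> rp_dist (line_act R U) (line_act R S)"
proof -
  obtain x y where x: "x \<in> U" "norm x = 1" and y: "y \<in> S" "norm y = 1"
    using line_has_unit U S by blast
  have K: "K > 0"
    using stretch_bounds_le[OF R] k by simp
  have Rx: "k \<le> norm (R *v x)" "norm (R *v x) \<le> K" and Ry: "k \<le> norm (R *v y)" "norm (R *v y) \<le> K"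
    using R x y unfolding stretch_bounds_def by (metis mult.right_neutral)+
  have "R *v x \<in> line_act R U" "R *v y \<in> line_act R S"
    using x y unfolding line_act_def by auto
  then have dist_image: "rp_dist (line_act R U) (line_act R S)
      = \<bar>det2 (R *v x) (R *v y)\<bar> / (norm (R *v x) * norm (R *v y))"
    using Rx(1) Ry(1) k
    by (intro rp_dist_eq is_line_image stretch_bounds_inj[OF R k] U S) auto
  have "x \<noteq> 0" "y \<noteq> 0"
    using x y by auto
  have "(k / K)\<^sup>2 * rp_dist U S = k\<^sup>2 * \<bar>det2 x y\<bar> / K\<^sup>2"
    using rp_dist_eq[OF U S x(1) \<open>x \<noteq> 0\<close> y(1) \<open>y \<noteq> 0\<close>] x y by (simp add: power_divide)
  also have "\<dots> \<le> \<bar>det2 (R *v x) (R *v y)\<bar> / K\<^sup>2"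
    using abs_det2_image_ge[of k R x y] R k unfolding stretch_bounds_def
    by (simp add: divide_right_mono)
  also have "\<dots> \<le> \<bar>det2 (R *v x) (R *v y)\<bar> / (norm (R *v x) * norm (R *v y))"
    using Rx Ry k K unfolding power2_eq_square by (intro divide_left_mono mult_mono mult_pos_pos) auto
  finally show ?thesis
    unfolding dist_image .
qed

lemma rp_dist_opnorm_le:
  assumes dom: "dominates F U S \<eta>" and "\<eta> \<ge> 1" and U: "is_line U" and S: "is_line S"
    and x: "x \<in> U"
  shows "rp_dist U S * opnorm F * norm x \<le> 2 * norm (F *v x)"
proof (cases "x = 0")
  case True
  then show ?thesis by simp
next
  case False
  obtain y where y: "y \<in> S" "norm y = 1"
    using line_has_unit S by blast
  define D where "D = det2 x y"
  have "y \<noteq> 0"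
    using y by auto
  then have dist: "rp_dist U S * norm x = \<bar>D\<bar>"
    using rp_dist_eq[OF U S x False y(1)] y False unfolding D_def by simp
  show ?thesis
  proof (cases "D = 0")
    case True
    then show ?thesis
      using dist by auto
  next
    case False
    have "\<eta> * norm (F *v y) * norm x < norm (F *v x) * norm y"
      using dom x y(1) \<open>x \<noteq> 0\<close> \<open>y \<noteq> 0\<close> unfolding dominates_def by blast
    moreover have "norm (F *v y) * norm x \<le> \<eta> * norm (F *v y) * norm x"
      using \<open>\<eta> \<ge> 1\<close> mult_right_mono[of 1 \<eta> "norm (F *v y) * norm x"] by (simp add: mult.assoc)
    ultimately have Fy: "norm (F *v y) * norm x \<le> norm (F *v x)"
      using y(2) by simp
    \<comment> \<open>every \<open>w\<close> is a combination of \<open>x\<close> and the unit vector \<open>y\<close> with coefficients controlled by \<open>D\<close>\<close>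
    have "norm (F *v w) \<le> 2 * norm (F *v x) / \<bar>D\<bar> * norm w" for w
    proof -
      have "F *v w = (det2 w y / D) *\<^sub>R (F *v x) + (det2 x w / D) *\<^sub>R (F *v y)"
        using vec2_decompose[of x y w] False unfolding D_def
        by (metis matrix_vector_mult_scaleR matrix_vector_right_distrib)
      then have "norm (F *v w) \<le> \<bar>det2 w y\<bar> / \<bar>D\<bar> * norm (F *v x) + \<bar>det2 x w\<bar> / \<bar>D\<bar> * norm (F *v y)"
        by (auto intro: order_trans[OF norm_triangle_ineq] simp: abs_divide)
      also have "\<dots> \<le> norm w / \<bar>D\<bar> * norm (F *v x) + norm x * norm w / \<bar>D\<bar> * norm (F *v y)"
        using abs_det2_le[of w y] abs_det2_le[of x w] y
        by (intro add_mono mult_right_mono divide_right_mono) auto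
      also have "\<dots> = norm w / \<bar>D\<bar> * norm (F *v x) + norm w / \<bar>D\<bar> * (norm (F *v y) * norm x)"
        by simp
      also have "\<dots> \<le> norm w / \<bar>D\<bar> * norm (F *v x) + norm w / \<bar>D\<bar> * norm (F *v x)"
        using Fy by (intro add_left_mono mult_left_mono) auto
      also have "\<dots> = 2 * norm (F *v x) / \<bar>D\<bar> * norm w"
        by simp
      finally show ?thesis .
    qed
    then have "opnorm F \<le> 2 * norm (F *v x) / \<bar>D\<bar>"
      unfolding opnorm_def by (rule onorm_le)
    then show ?thesis
      using dist False by (simp add: field_simps)
  qed
qed

lemma cprod_norm_pow_ge:
  assumes u: "\<forall>j. line_act (A j) (u j) = u (j + 1)"
    and expand: "\<forall>j. \<forall>z\<in>u j. c * norm z \<le> norm (cprod A N j *v z)"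
    and "c \<ge> 0" and x: "x \<in> u i"
  shows "c ^ m * norm x \<le> norm (cprod A (m * N) i *v x)"
proof (induction m)
  case 0
  then show ?case by simp
next
  case (Suc m)
  have "cprod A (m * N) i *v x \<in> u (i + int (m * N))"
    using x cprod_line_act[OF u, of "m * N" i] unfolding line_act_def by blast
  then have "c * norm (cprod A (m * N) i *v x)
      \<le> norm (cprod A N (i + int (m * N)) *v (cprod A (m * N) i *v x))"
    using expand by blast
  also have "\<dots> = norm (cprod A (Suc m * N) i *v x)"
    using cprod_add[of A "m * N" N i] by (simp add: add.commute matrix_vector_mul_assoc)
  finally have "c * norm (cprod A (m * N) i *v x) \<le> norm (cprod A (Suc m * N) i *v x)" .
  moreover have "c ^ Suc m * norm x \<le> c * norm (cprod A (m * N) i *v x)"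
    using Suc \<open>c \<ge> 0\<close> by (simp add: mult.assoc mult_left_mono)
  ultimately show ?case
    by linarith
qed

lemma dominated_splitting_unstable_expansion:
  assumes lines: "\<forall>i. is_line (s i) \<and> is_line (u i)"
    and dom: "\<forall>i. dominates (cprod A N i) (u i) (s i) \<eta>" and "\<eta> \<ge> 1"
    and sep: "\<forall>i. rp_dist (u i) (s i) > \<delta>" and "\<delta> > 0"
    and inf: "(INF i. opnorm (cprod A N i)) > 0"
  shows "\<exists>c>0. \<forall>i. \<forall>z\<in>u i. c * norm z \<le> norm (cprod A N i *v z)"
proof -
  define c0 where "c0 = (INF i. opnorm (cprod A N i))"
  have c0: "c0 \<le> opnorm (cprod A N i)" for i
    unfolding c0_def by (rule cINF_lower) (auto intro: bdd_belowI[of _ 0] simp: opnorm_nonneg)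
  have "\<delta> * c0 / 2 * norm z \<le> norm (cprod A N i *v z)" if "z \<in> u i" for i z
  proof -
    have "\<delta> * c0 * norm z \<le> rp_dist (u i) (s i) * opnorm (cprod A N i) * norm z"
      using sep[rule_format, of i] c0 inf \<open>\<delta> > 0\<close> unfolding c0_def[symmetric]
      by (intro mult_right_mono mult_mono) (auto simp: less_imp_le)
    also have "\<dots> \<le> 2 * norm (cprod A N i *v z)"
      using rp_dist_opnorm_le dom lines that \<open>\<eta> \<ge> 1\<close> by blast
    finally show ?thesis
      by simp
  qed
  then show ?thesis
    using \<open>\<delta> > 0\<close> inf unfolding c0_def[symmetric] by (intro exI[of _ "\<delta> * c0 / 2"]) auto
qed

lemma INF_opnorm_cprod_conj_pos:
  assumes u: "\<forall>j. line_act (A j) (u j) = u (j + 1)" and lines: "\<forall>i. is_line (u i)"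
    and expand: "\<forall>j. \<forall>z\<in>u j. c * norm z \<le> norm (cprod A N j *v z)" and "c > 0"
    and conj: "\<forall>i. A' i ** R i = R (i + 1) ** A i"
    and R: "\<forall>i. stretch_bounds k K (R i)" and k: "k > 0"
  shows "(INF i. opnorm (cprod A' (m * N) i)) > 0"
proof -
  have K: "K > 0"
    using stretch_bounds_le R k by (metis order_less_le_trans)
  have "k * c ^ m / K \<le> opnorm (cprod A' (m * N) i)" for i
  proof -
    obtain x where x: "x \<in> u i" "norm x = 1"
      using line_has_unit lines by blast
    have "k * c ^ m \<le> k * norm (cprod A (m * N) i *v x)"
      using cprod_norm_pow_ge[OF u expand _ x(1), of m] \<open>c > 0\<close> x(2) k by simp
    also have "\<dots> \<le> norm (R (i + int (m * N)) *v (cprod A (m * N) i *v x))"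
      using R unfolding stretch_bounds_def by blast
    also have "\<dots> = norm (cprod A' (m * N) i *v (R i *v x))"
      using cprod_conj[OF conj] by (simp add: matrix_vector_mul_assoc)
    also have "\<dots> \<le> opnorm (cprod A' (m * N) i) * norm (R i *v x)"
      by (rule norm_le_opnorm)
    also have "\<dots> \<le> opnorm (cprod A' (m * N) i) * K"
      using R x opnorm_nonneg unfolding stretch_bounds_def by (metis mult.right_neutral mult_left_mono)
    finally show ?thesis
      using K by (simp add: field_simps)
  qed
  then have "k * c ^ m / K \<le> (INF i. opnorm (cprod A' (m * N) i))"
    by (intro cINF_greatest) auto
  moreover have "0 < k * c ^ m / K"
    using k K \<open>c > 0\<close> by simp
  ultimately show ?thesis
    by linarith
qed

lemma dominates_cprod_conj:
  assumes u: "\<forall>j. line_act (A j) (u j) = u (j + 1)" and s: "\<forall>j. line_act (A j) (s j) = s (j + 1)"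
    and lines: "\<forall>j. is_line (s j)" and dom: "\<forall>j. dominates (cprod A N j) (u j) (s j) \<eta>"
    and "\<eta> > 1" and conj: "\<forall>i. A' i ** R i = R (i + 1) ** A i"
    and R: "\<forall>i. stretch_bounds k K (R i)" and k: "k > 0"
  shows "\<exists>m>0. \<exists>\<eta>'>1. \<forall>i.
    dominates (cprod A' (m * N) i) (line_act (R i) (u i)) (line_act (R i) (s i)) \<eta>'"
proof -
  have "k \<le> K"
    using stretch_bounds_le R by blast
  \<comment> \<open>\<open>(K / k)\<^sup>2\<close> bounds the distortion of norm ratios by the conjugacy\<close>
  obtain m where m: "(K / k)\<^sup>2 < \<eta> ^ m"
    using real_arch_pow[OF \<open>\<eta> > 1\<close>] by blast
  have "m > 0"
    using m power_mono[OF \<open>k \<le> K\<close>, of 2] k by (cases m) (auto simp: power_divide)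
  moreover have "\<eta> ^ m * (k / K)\<^sup>2 > 1"
    using m k \<open>k \<le> K\<close> by (simp add: power_divide field_simps)
  moreover have "dominates (cprod A' (m * N) i) (line_act (R i) (u i)) (line_act (R i) (s i))
      (\<eta> ^ m * (k / K)\<^sup>2)" for i
  proof -
    have "dominates (cprod A (m * N) i) (u i) (s i) (\<eta> ^ m)"
      using dominates_cprod_pow[OF u s lines dom] \<open>\<eta> > 1\<close> \<open>m > 0\<close> by simp
    then show ?thesis
      using cprod_conj[OF conj] R k \<open>\<eta> > 1\<close> by (intro dominates_conj) auto
  qed
  ultimately show ?thesis
    by blast
qed

lemma dominated_splitting_conj:
  assumes DS: "dominated_splitting A" and conj: "\<forall>i. A' i ** R i = R (i + 1) ** A i"
    and R: "\<forall>i. stretch_bounds k K (R i)" and k: "k > 0"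
  shows "dominated_splitting A'"
proof -
  obtain M s u N \<eta> \<delta> where M: "\<forall>i. opnorm (A i) \<le> M"
    and lines: "\<forall>i. is_line (s i) \<and> is_line (u i)"
    and u: "\<forall>i. line_act (A i) (u i) = u (i + 1)" and s: "\<forall>i. line_act (A i) (s i) = s (i + 1)"
    and "N \<ge> 1" and "\<eta> > 1" and dom: "\<forall>i. dominates (cprod A N i) (u i) (s i) \<eta>"
    and "\<delta> > 0" and sep: "\<forall>i. rp_dist (u i) (s i) > \<delta>" and inf: "(INF i. opnorm (cprod A N i)) > 0"
    using DS unfolding dominated_splitting_iff by blast
  obtain c where "c > 0" and expand: "\<forall>i. \<forall>z\<in>u i. c * norm z \<le> norm (cprod A N i *v z)"
    using dominated_splitting_unstable_expansion[OF lines dom _ sep \<open>\<delta> > 0\<close> inf] \<open>\<eta> > 1\<close> by auto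
  define u' where "u' i = line_act (R i) (u i)" for i
  define s' where "s' i = line_act (R i) (s i)" for i
  obtain m \<eta>' where "m > 0" "\<eta>' > 1"
    and dom': "\<forall>i. dominates (cprod A' (m * N) i) (u' i) (s' i) \<eta>'"
    unfolding u'_def s'_def using dominates_cprod_conj[OF u s _ dom \<open>\<eta> > 1\<close> conj R k] lines by blast
  have "k \<le> K"
    using stretch_bounds_le R by blast
  have "\<forall>i. opnorm (A' i) \<le> K * M / k"
    using opnorm_conj_le conj R k M by blast
  moreover have "\<forall>i. is_line (s' i) \<and> is_line (u' i)"
    unfolding s'_def u'_def using lines is_line_image stretch_bounds_inj R k by blast
  moreover have "\<forall>i. line_act (A' i) (u' i) = u' (i + 1) \<and> line_act (A' i) (s' i) = s' (i + 1)"
    unfolding s'_def u'_def using line_act_conj conj u s by metis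
  moreover have "\<forall>i. rp_dist (u' i) (s' i) > (k / K)\<^sup>2 * \<delta>"
  proof
    fix i
    have "(k / K)\<^sup>2 * \<delta> < (k / K)\<^sup>2 * rp_dist (u i) (s i)"
      using sep k \<open>k \<le> K\<close> by simp
    also have "\<dots> \<le> rp_dist (u' i) (s' i)"
      unfolding s'_def u'_def using rp_dist_line_act_ge lines R k by blast
    finally show "rp_dist (u' i) (s' i) > (k / K)\<^sup>2 * \<delta>" .
  qed
  moreover have "(INF i. opnorm (cprod A' (m * N) i)) > 0"
    using INF_opnorm_cprod_conj_pos[OF u _ expand \<open>c > 0\<close> conj R k] lines by blast
  moreover have "m * N \<ge> 1" "(k / K)\<^sup>2 * \<delta> > 0"
    using \<open>N \<ge> 1\<close> \<open>m > 0\<close> \<open>\<delta> > 0\<close> k \<open>k \<le> K\<close> by auto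
  ultimately show ?thesis
    unfolding dominated_splitting_iff using \<open>\<eta>' > 1\<close> dom' by blast
qed

theorem lemma3p13:
  fixes P T Q :: "int \<Rightarrow> real^2^2" and C1 C2 :: real
  assumes "GL2_cocycle P" and "GL2_cocycle T" and "GL2_cocycle Q"
    and "\<forall>i. P i = Q (i + 1) ** T i ** matrix_inv (Q i)"
    and "\<forall>i. C1 > sigma1 (Q i) \<and> sigma1 (Q i) \<ge> sigma2 (Q i) \<and> sigma2 (Q i) > C2"
    and "C2 > 0"
  shows "dominated_splitting P \<longleftrightarrow> dominated_splitting T"
proof -
  have Q: "stretch_bounds C2 C1 (Q i)" for i
    using stretch_bounds_mono[OF stretch_bounds_sigma] assms(5) by (simp add: less_imp_le)
  have Q_inv: "stretch_bounds (1 / C1) (1 / C2) (matrix_inv (Q i))" for i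
    using stretch_bounds_matrix_inv[OF Q \<open>C2 > 0\<close>] .
  have "C1 > 0"
    using stretch_bounds_le[OF Q] \<open>C2 > 0\<close> by (metis order_less_le_trans)
  have inv: "invertible (Q i)" for i
    using stretch_bounds_invertible[OF Q \<open>C2 > 0\<close>] .
  have PQ: "\<forall>i. P i ** Q i = Q (i + 1) ** T i"
    using assms(4) matrix_inv_left[OF inv] by (simp add: matrix_mul_assoc[symmetric] matrix_mul_rid)
  have TQ: "\<forall>i. T i ** matrix_inv (Q i) = matrix_inv (Q (i + 1)) ** P i"
    using assms(4) matrix_inv_left[OF inv] by (simp add: matrix_mul_assoc matrix_mul_lid)
  show ?thesis
  proof
    assume "dominated_splitting T"
    then show "dominated_splitting P"
      by (rule dominated_splitting_conj[OF _ PQ allI[OF Q] \<open>C2 > 0\<close>])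
  next
    assume "dominated_splitting P"
    then show "dominated_splitting T"
      by (rule dominated_splitting_conj[OF _ TQ allI[OF Q_inv]]) (use \<open>C1 > 0\<close> in simp)
  qed
qed

end
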